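(* Let $f:\mathbb{Z}_2^\ell\to\mathbb{Z}_2^\ell$ be a randomized bitwise partitioned function, and let $x,z\in\mathbb{Z}_2^\ell$ be fixed bitstrings. Then $G(x,z,f(z)\vdash f(x))\ge 2^{-\Delta(x,z)}$, where $\Delta(x,z)=\#\{i\mid x_i\ne z_i\}$ is the Hamming distance.
   Context: A randomized boolean function $f:\mathbb{Z}_2^m\to\mathbb{Z}_2^n$ is partitioned if $m=m_1+\dots+m_k$, $n=n_1+\dots+n_k$ and $f=f_1::\dots::f_k$ (concatenation of outputs on the corresponding input blocks), with $f_i:\mathbb{Z}_2^{m_i}\to\mathbb{Z}_2^{n_i}$, such that each component is independent of the inputs and outputs of all other components: the advantage of $x_{\bar\imath},f_{\bar\imath}(x_{\bar\imath})$ for guessing $f_i(x_i)$ is zero, where $\bar\imath=\{j\ne i\}$. It is bitwise partitioned if $m=n=\ell$ and $m_i=n_i=1$ for all $i$. $G(\Xi\vdash\Theta)$ is the guessing chance: the maximal probability, over randomized guessing procedures, of outputting $\Theta$ from input $\Xi$, the probability taken over the randomness involved (here the randomness of $f$); advantage of $\Xi$ for $\Theta$ is $G(\Xi\vdash\Theta)-G(\emptyset\vdash\Theta)$. *)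

theory Defs
  imports "HOL-Probability.Probability"
begin

text \<open>A randomized boolean function is a probability distribution P over deterministic
functions F :: bool list \<Rightarrow> bool list (the randomness of f).\<close>

text \<open>Guessing chance G(Xi |- Theta): supremum over randomized guessing procedures
g (mapping the observed value to a distribution of guesses, with randomness
independent of f) of the probability that the guess equals Theta.\<close>
definition guess_chance ::
  "'w pmf \<Rightarrow> ('w \<Rightarrow> 'a) \<Rightarrow> ('w \<Rightarrow> 'b) \<Rightarrow> real" where
  "guess_chance W Xi Theta =
     (SUP g :: 'a \<Rightarrow> 'b pmf.
        measure_pmf.prob (bind_pmf W (\<lambda>w. map_pmf (\<lambda>t. t = Theta w) (g (Xi w)))) {True})"

definition advantage ::
  "'w pmf \<Rightarrow> ('w \<Rightarrow> 'a) \<Rightarrow> ('w \<Rightarrow> 'b) \<Rightarrow> real" where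
  "advantage W Xi Theta = guess_chance W Xi Theta - guess_chance W (\<lambda>_. ()) Theta"

definition drop_idx :: "nat \<Rightarrow> bool list \<Rightarrow> bool list" where
  "drop_idx i xs = nths xs (- {i})"

definition bitwise_partitioned :: "nat \<Rightarrow> ((bool list \<Rightarrow> bool list) pmf) \<Rightarrow> bool" where
  "bitwise_partitioned l P \<longleftrightarrow>
     (\<forall>F \<in> set_pmf P.
        (\<forall>x. length x = l \<longrightarrow> length (F x) = l) \<and>
        (\<forall>i < l. \<forall>x y. length x = l \<longrightarrow> length y = l \<longrightarrow> x ! i = y ! i \<longrightarrow> F x ! i = F y ! i)) \<and>
     (\<forall>i < l. \<forall>x. length x = l \<longrightarrow>
        advantage P (\<lambda>F. (drop_idx i x, drop_idx i (F x))) (\<lambda>F. F x ! i) = 0)"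

definition hamming :: "bool list \<Rightarrow> bool list \<Rightarrow> nat" where
  "hamming x z = card {i. i < length x \<and> x ! i \<noteq> z ! i}"

end

theory Submission
  imports Defs
begin

text \<open>Since output bit i of every realization of f depends only on input bit i, f(x) agrees
with f(z) at every position where x and z agree. Guessing uniformly among the 2^Delta(x,z)
bitstrings with this property therefore hits f(x) with probability exactly 2^-Delta(x,z),
whatever the realization of f.\<close>

lemma success_probability_eq_expectation:
  "measure_pmf.prob (bind_pmf W (\<lambda>w. map_pmf (\<lambda>t. t = Theta w) (g (Xi w)))) {True}
     = measure_pmf.expectation W (\<lambda>w. pmf (g (Xi w)) (Theta w))"
proof -
  have "\<And>w. pmf (map_pmf (\<lambda>t. t = Theta w) (g (Xi w))) True = pmf (g (Xi w)) (Theta w)"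
    by (simp add: pmf_map vimage_def measure_pmf_single)
  then show ?thesis
    by (simp add: measure_pmf_single pmf_bind)
qed

lemma guess_chance_ge_procedure:
  assumes "\<And>w. w \<in> set_pmf W \<Longrightarrow> pmf (g (Xi w)) (Theta w) = p"
  shows "p \<le> guess_chance W Xi Theta"
proof -
  let ?succ = "\<lambda>g. measure_pmf.prob (bind_pmf W (\<lambda>w. map_pmf (\<lambda>t. t = Theta w) (g (Xi w)))) {True}"
  have "p = measure_pmf.expectation W (\<lambda>w. pmf (g (Xi w)) (Theta w))"
    using assms by (subst integral_cong_AE[where g = "\<lambda>_. p"]) (auto intro: AE_pmfI)
  also have "\<dots> = ?succ g"
    by (rule success_probability_eq_expectation[symmetric])
  also have "\<dots> \<le> (SUP g. ?succ g)"
    by (rule cSUP_upper) (auto intro: bdd_aboveI[of _ 1] measure_pmf.prob_le_1)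
  finally show ?thesis
    unfolding guess_chance_def .
qed

definition consistent_outputs :: "nat \<Rightarrow> bool list \<Rightarrow> bool list \<Rightarrow> bool list \<Rightarrow> bool list set" where
  "consistent_outputs n x z v = {y. length y = n \<and> (\<forall>i<n. x ! i = z ! i \<longrightarrow> y ! i = v ! i)}"

lemma finite_consistent_outputs: "finite (consistent_outputs n x z v)"
  by (rule finite_subset[OF _ finite_lists_length_eq[of UNIV n]])
     (auto simp: consistent_outputs_def)

lemma consistent_outputs_nonempty: "consistent_outputs n x z v \<noteq> {}"
  by (auto simp: consistent_outputs_def intro!: exI[of _ "map (\<lambda>i. v ! i) [0..<n]"])

lemma card_consistent_outputs:
  assumes "length x = n"
  shows "card (consistent_outputs n x z v) = 2 ^ hamming x z"
proof -
  define D where "D = {i. i < n \<and> x ! i \<noteq> z ! i}"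
  let ?S = "consistent_outputs n x z v"
  have "bij_betw (\<lambda>y. restrict ((!) y) D) ?S (PiE D (\<lambda>_. UNIV :: bool set))"
  proof (rule bij_betwI')
    fix y y' assume y: "y \<in> ?S" and y': "y' \<in> ?S"
    show "(restrict ((!) y) D = restrict ((!) y') D) = (y = y')"
    proof
      assume eq: "restrict ((!) y) D = restrict ((!) y') D"
      show "y = y'"
      proof (rule nth_equalityI)
        show "length y = length y'"
          using y y' by (simp add: consistent_outputs_def)
        show "y ! i = y' ! i" if "i < length y" for i
          using y y' that fun_cong[OF eq, of i]
          by (cases "i \<in> D") (auto simp: consistent_outputs_def D_def)
      qed
    qed simp
  next
    fix h assume h: "h \<in> PiE D (\<lambda>_. UNIV :: bool set)"
    define y where "y = map (\<lambda>i. if i \<in> D then h i else v ! i) [0..<n]"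
    have "y \<in> ?S"
      by (auto simp: y_def consistent_outputs_def D_def)
    moreover have "h = restrict ((!) y) D"
    proof
      show "h i = restrict ((!) y) D i" for i
        using h by (cases "i \<in> D") (auto simp: y_def D_def PiE_def extensional_def)
    qed
    ultimately show "\<exists>y\<in>?S. h = restrict ((!) y) D" by blast
  qed simp
  then have "card ?S = card (PiE D (\<lambda>_. UNIV :: bool set))"
    by (rule bij_betw_same_card)
  also have "\<dots> = 2 ^ card D"
    by (simp add: card_PiE D_def)
  finally show ?thesis
    using assms by (simp add: hamming_def D_def)
qed

lemma bitwise_partitioned_output_consistent:
  assumes "bitwise_partitioned l P" and "F \<in> set_pmf P"
    and "length x = l" and "length z = l"
  shows "F x \<in> consistent_outputs l x z (F z)"
  using assms unfolding bitwise_partitioned_def consistent_outputs_def by blast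

theorem proposition5p2:
  fixes l :: nat and P :: "(bool list \<Rightarrow> bool list) pmf" and x z :: "bool list"
  assumes "bitwise_partitioned l P"
    and "length x = l" and "length z = l"
  shows "guess_chance P (\<lambda>F. (x, z, F z)) (\<lambda>F. F x) \<ge> (1 / 2) ^ hamming x z"
proof -
  define guess where
    "guess = (\<lambda>(x', z', v). pmf_of_set (consistent_outputs (length x') x' z' v))"
  have "pmf (guess (x, z, F z)) (F x) = (1 / 2) ^ hamming x z" if "F \<in> set_pmf P" for F
  proof -
    have "F x \<in> consistent_outputs l x z (F z)"
      using assms(1) that assms(2,3) by (rule bitwise_partitioned_output_consistent)
    then show ?thesis
      using assms(2) finite_consistent_outputs consistent_outputs_nonempty card_consistent_outputs
      by (simp add: guess_def power_one_over)
  qed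
  then show ?thesis
    by (rule guess_chance_ge_procedure)
qed

end
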